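(* Let $k\ge1$, $n\ge 2k+1$, let $G$ be a spanning subgraph of $J(n;k,k+1)$, and let $m\ge3$. If for some $\gamma\in\binom{[n]}{k-1}$ the graph $H_\gamma=H_\gamma(G)$ contains a cycle of length $m$, then $G$ contains a cycle of length $2m$. Here $H_\gamma$ is the graph whose vertex set is the set of all $k$-subsets of $[n]$ containing $\gamma$, in which two distinct vertices $x,y$ are adjacent iff there is a path of length $2$ between $x$ and $y$ in $G$.
   Context: $J(n;k,k+1)$ is the bipartite graph with vertex set $\binom{[n]}{k}\cup\binom{[n]}{k+1}$ (subsets of $[n]=\{1,\dots,n\}$), with $u,v$ adjacent iff $u\subset v$ or $v\subset u$. A spanning subgraph has the same vertex set. *)

theory Defs
  imports Main
begin

definition J_vert :: "nat \<Rightarrow> nat \<Rightarrow> nat set set" where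
  "J_vert n k = {A. A \<subseteq> {1..n} \<and> (card A = k \<or> card A = k + 1)}"

definition J_adj :: "nat \<Rightarrow> nat \<Rightarrow> nat set \<Rightarrow> nat set \<Rightarrow> bool" where
  "J_adj n k u v \<longleftrightarrow> u \<in> J_vert n k \<and> v \<in> J_vert n k \<and> (u \<subset> v \<or> v \<subset> u)"

text \<open>A spanning subgraph of J(n;k,k+1) is given by a symmetric edge relation E
  contained in the edge relation of J(n;k,k+1); its vertex set is J_vert n k.\<close>
definition spanning_subgraph_J :: "nat \<Rightarrow> nat \<Rightarrow> (nat set \<Rightarrow> nat set \<Rightarrow> bool) \<Rightarrow> bool" where
  "spanning_subgraph_J n k E \<longleftrightarrow>
     (\<forall>u v. E u v \<longrightarrow> J_adj n k u v) \<and> (\<forall>u v. E u v \<longrightarrow> E v u)"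

definition has_cycle :: "'a set \<Rightarrow> ('a \<Rightarrow> 'a \<Rightarrow> bool) \<Rightarrow> nat \<Rightarrow> bool" where
  "has_cycle V E m \<longleftrightarrow> m \<ge> 3 \<and> (\<exists>f :: nat \<Rightarrow> 'a. inj_on f {..<m} \<and> (\<forall>i<m. f i \<in> V)
       \<and> (\<forall>i<m. E (f i) (f (Suc i mod m))))"

definition H_vert :: "nat \<Rightarrow> nat \<Rightarrow> nat set \<Rightarrow> nat set set" where
  "H_vert n k \<gamma> = {x. x \<subseteq> {1..n} \<and> card x = k \<and> \<gamma> \<subseteq> x}"

definition H_adj :: "nat \<Rightarrow> nat \<Rightarrow> (nat set \<Rightarrow> nat set \<Rightarrow> bool) \<Rightarrow> nat set \<Rightarrow> nat set \<Rightarrow> nat set \<Rightarrow> bool" where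
  "H_adj n k E \<gamma> x y \<longleftrightarrow> x \<in> H_vert n k \<gamma> \<and> y \<in> H_vert n k \<gamma> \<and> x \<noteq> y \<and>
     (\<exists>z. z \<noteq> x \<and> z \<noteq> y \<and> E x z \<and> E z y)"

end

theory Submission
  imports Defs
begin

text \<open>Two sets adjacent in H_gamma are k-sets, so a common neighbour of them in G is a
  (k+1)-set containing both, i.e. their union. Following the cycle x_0, ..., x_(m-1) of H_gamma
  through these unions gives a closed walk of length 2m in G. It is a cycle because the unions
  are distinct: a (k+1)-set containing the (k-1)-set gamma contains only two k-sets containing
  gamma, whereas two different pairs {x_i, x_(i+1)} and {x_j, x_(j+1)} of consecutive vertices
  of a cycle of length m >= 3 involve at least three distinct sets.\<close>

lemma among_three_middle_sets_two_equal:
  assumes "finite z" "\<gamma> \<subseteq> z" "card z = card \<gamma> + 2"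
    and "\<gamma> \<subseteq> a" "a \<subseteq> z" "card a = card \<gamma> + 1"
    and "\<gamma> \<subseteq> b" "b \<subseteq> z" "card b = card \<gamma> + 1"
    and "\<gamma> \<subseteq> c" "c \<subseteq> z" "card c = card \<gamma> + 1"
  shows "a = b \<or> a = c \<or> b = c"
proof -
  have "card (z - \<gamma>) = 2"
    using assms(1-3) by (simp add: card_Diff_subset finite_subset)
  then obtain p q where pq: "z - \<gamma> = {p, q}"
    by (auto simp: card_2_iff)
  have "w = z - {p} \<or> w = z - {q}"
    if w: "\<gamma> \<subseteq> w" "w \<subseteq> z" "card w = card \<gamma> + 1" for w
  proof -
    have "card (z - w) = 1"
      using w assms(1,3) by (simp add: card_Diff_subset finite_subset)
    then obtain e where e: "z - w = {e}"
      by (rule card_1_singletonE)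
    then have "e = p \<or> e = q"
      using w(1) pq by blast
    moreover have "w = z - {e}"
      using e w(2) by blast
    ultimately show ?thesis
      by blast
  qed
  then have "a = z - {p} \<or> a = z - {q}" "b = z - {p} \<or> b = z - {q}"
    "c = z - {p} \<or> c = z - {q}"
    using assms(4-12) by simp_all
  then show ?thesis
    by blast
qed

lemma add_mod_neq_self:
  fixes i d m :: nat
  assumes "i < m" "0 < d" "d < m"
  shows "(i + d) mod m \<noteq> i"
proof (cases "i + d < m")
  case False
  then have "(i + d) mod m = i + d - m"
    using assms by (simp add: mod_if)
  then show ?thesis
    using False assms(3) by linarith
qed (use assms(2) in simp)

lemma inj_on_union_consecutive:
  fixes f :: "nat \<Rightarrow> 'a set"
  assumes inj: "inj_on f {..<m}" and "m \<ge> 3"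
    and layer: "\<And>i. i < m \<Longrightarrow> \<gamma> \<subseteq> f i \<and> card (f i) = card \<gamma> + 1"
    and union: "\<And>i. i < m \<Longrightarrow> card (f i \<union> f (Suc i mod m)) = card \<gamma> + 2"
  shows "inj_on (\<lambda>i. f i \<union> f (Suc i mod m)) {..<m}"
proof (rule inj_onI, rule ccontr)
  define s where "s i = Suc i mod m" for i
  fix i j
  assume "i \<in> {..<m}" "j \<in> {..<m}" "i \<noteq> j"
    and eq: "f i \<union> f (Suc i mod m) = f j \<union> f (Suc j mod m)"
  then have ij: "i < m" "j < m" "i \<noteq> j"
    by auto
  have s: "s t < m" "s t \<noteq> t" "s (s t) \<noteq> t" if "t < m" for t
    using that add_mod_neq_self[of t m 1] add_mod_neq_self[of t m 2] \<open>m \<ge> 3\<close>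
    by (auto simp: s_def mod_Suc_eq)
  let ?z = "f i \<union> f (s i)"
  have card_z: "card ?z = card \<gamma> + 2"
    using union[OF ij(1)] by (simp add: s_def)
  then have z: "finite ?z" "\<gamma> \<subseteq> ?z" "card ?z = card \<gamma> + 2"
    using layer[OF ij(1)] card_ge_0_finite[of ?z] by simp_all blast
  have three: "f a = f b \<or> f a = f c \<or> f b = f c"
    if "a < m" "b < m" "c < m" "f a \<subseteq> ?z" "f b \<subseteq> ?z" "f c \<subseteq> ?z" for a b c
    using that layer[of a] layer[of b] layer[of c]
    by (intro among_three_middle_sets_two_equal[OF z]) auto
  have sub: "f i \<subseteq> ?z" "f (s i) \<subseteq> ?z" "f j \<subseteq> ?z" "f (s j) \<subseteq> ?z"
    using eq by (auto simp: s_def)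
  show False
  proof (cases "j = s i")
    case True
    then show False
      using three[OF ij(1,2) s(1)[OF ij(2)] sub(1,3,4)] inj ij s[OF ij(1)] s[OF ij(2)]
      by (auto simp: inj_on_def)
  next
    case False
    then show False
      using three[OF ij(1) s(1)[OF ij(1)] ij(2) sub(1,2,3)] inj ij s[OF ij(1)]
      by (auto simp: inj_on_def)
  qed
qed

lemma has_cycle_subdivide:
  fixes f Z :: "nat \<Rightarrow> 'a"
  assumes "m \<ge> 2"
    and "inj_on f {..<m}" "inj_on Z {..<m}" "f ` {..<m} \<inter> Z ` {..<m} = {}"
    and "\<And>i. i < m \<Longrightarrow> f i \<in> V \<and> Z i \<in> V"
    and "\<And>i. i < m \<Longrightarrow> E (f i) (Z i) \<and> E (Z i) (f (Suc i mod m))"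
  shows "has_cycle V E (2 * m)"
proof -
  define g where "g t = (if even t then f (t div 2) else Z (t div 2))" for t
  have "inj_on g {..<2 * m}"
  proof (rule inj_onI)
    fix a b
    assume "a \<in> {..<2 * m}" "b \<in> {..<2 * m}" "g a = g b"
    then have "a div 2 < m" "b div 2 < m" "g a = g b"
      by auto
    then have "even a = even b" "a div 2 = b div 2"
      using assms(2-4) by (auto simp: g_def inj_on_def split: if_splits)
    then show "a = b"
      by (metis div_mult_mod_eq mod2_eq_if)
  qed
  moreover have "g t \<in> V" if "t < 2 * m" for t
    using assms(5)[of "t div 2"] that by (simp add: g_def)
  moreover have "E (g t) (g (Suc t mod (2 * m)))" if t: "t < 2 * m" for t
  proof (cases "even t")
    case True
    then have "Suc t < 2 * m"
      using t by (metis Suc_lessI even_Suc even_mult_iff even_numeral)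
    then show ?thesis
      using assms(6)[of "t div 2"] t True by (simp add: g_def)
  next
    case False
    then obtain i where i: "t = 2 * i + 1"
      by (rule oddE)
    then have "Suc t = 2 * Suc i"
      by simp
    then have "Suc t mod (2 * m) = 2 * (Suc i mod m)"
      by (simp only: mult_mod_right)
    then show ?thesis
      using assms(6)[of i] t i by (simp add: g_def)
  qed
  ultimately show ?thesis
    using assms(1) unfolding has_cycle_def by (intro conjI exI[of _ g]) auto
qed

lemma spanning_subgraph_J_neighbour_of_k_set:
  assumes "spanning_subgraph_J n k E" "E x z" "card x = k"
  shows "x \<subset> z \<and> card z = k + 1"
proof -
  have "J_adj n k x z"
    using assms(1,2) by (simp add: spanning_subgraph_J_def)
  then have finite: "finite x" "finite z" and card_z: "card z = k \<or> card z = k + 1"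
    and "x \<subset> z \<or> z \<subset> x"
    by (auto simp: J_adj_def J_vert_def intro: finite_subset)
  moreover have "\<not> z \<subset> x"
  proof
    assume "z \<subset> x"
    then have "card z < k"
      using psubset_card_mono[OF finite(1)] assms(3) by blast
    then show False
      using card_z by linarith
  qed
  ultimately have "x \<subset> z"
    by blast
  moreover from this have "k < card z"
    using psubset_card_mono[OF finite(2)] assms(3) by blast
  ultimately show ?thesis
    using card_z by auto
qed

lemma H_adj_union_common_neighbour:
  assumes E: "spanning_subgraph_J n k E" and "H_adj n k E \<gamma> x y"
  shows "E x (x \<union> y) \<and> E (x \<union> y) y \<and> card (x \<union> y) = k + 1"
proof -
  obtain z where xy: "x \<in> H_vert n k \<gamma>" "y \<in> H_vert n k \<gamma>" "x \<noteq> y"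
    and z: "E x z" "E z y"
    using assms(2) unfolding H_adj_def by blast
  have card_xy: "card x = k" "card y = k"
    using xy(1,2) by (auto simp: H_vert_def)
  have "E y z"
    using E z(2) by (simp add: spanning_subgraph_J_def)
  then have "x \<subset> z" "y \<subset> z" and card_z: "card z = k + 1"
    using spanning_subgraph_J_neighbour_of_k_set[OF E] z(1) card_xy by auto
  then have sub: "x \<union> y \<subseteq> z"
    by blast
  have "finite z"
    using card_z card.infinite by fastforce
  then have finite: "finite x" "finite (x \<union> y)"
    using sub finite_subset by auto
  have "\<not> y \<subseteq> x"
    using card_subset_eq[OF finite(1)] card_xy xy(3) by metis
  then have "card x < card (x \<union> y)"
    using psubset_card_mono[OF finite(2), of x] by blast
  then have "x \<union> y = z"
    using card_seteq[OF \<open>finite z\<close> sub] card_xy card_z by simp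
  then show ?thesis
    using z card_z by simp
qed

theorem proposition5p1:
  fixes n k m :: nat and E :: "nat set \<Rightarrow> nat set \<Rightarrow> bool" and \<gamma> :: "nat set"
  assumes "k \<ge> 1" and "n \<ge> 2 * k + 1"
    and "spanning_subgraph_J n k E"
    and "m \<ge> 3"
    and "\<gamma> \<subseteq> {1..n}" and "card \<gamma> = k - 1"
    and "has_cycle (H_vert n k \<gamma>) (H_adj n k E \<gamma>) m"
  shows "has_cycle (J_vert n k) E (2 * m)"
proof -
  obtain f where inj: "inj_on f {..<m}" and in_H: "\<And>i. i < m \<Longrightarrow> f i \<in> H_vert n k \<gamma>"
    and adj: "\<And>i. i < m \<Longrightarrow> H_adj n k E \<gamma> (f i) (f (Suc i mod m))"
    using assms(7) unfolding has_cycle_def by blast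
  define Z where "Z i = f i \<union> f (Suc i mod m)" for i
  have f: "f i \<subseteq> {1..n} \<and> card (f i) = card \<gamma> + 1 \<and> \<gamma> \<subseteq> f i" if "i < m" for i
    using in_H[OF that] assms(1,6) by (simp add: H_vert_def)
  have Z: "E (f i) (Z i) \<and> E (Z i) (f (Suc i mod m)) \<and> Z i \<subseteq> {1..n}
      \<and> card (Z i) = card \<gamma> + 2" if "i < m" for i
    using H_adj_union_common_neighbour[OF assms(3) adj[OF that]] f[OF that]
      f[of "Suc i mod m"] \<open>m \<ge> 3\<close> assms(1,6)
    by (simp add: Z_def)
  have "inj_on Z {..<m}"
    unfolding Z_def using inj \<open>m \<ge> 3\<close> f Z
    by (intro inj_on_union_consecutive[where \<gamma> = \<gamma>]) (auto simp: Z_def)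
  moreover have "f i \<noteq> Z j" if "i < m" "j < m" for i j
    using f[OF that(1)] Z[OF that(2)] by auto
  then have "f ` {..<m} \<inter> Z ` {..<m} = {}"
    by blast
  moreover have "f i \<in> J_vert n k \<and> Z i \<in> J_vert n k" if "i < m" for i
    using f[OF that] Z[OF that] assms(1,6) by (simp add: J_vert_def)
  ultimately show ?thesis
    using has_cycle_subdivide[of m f Z "J_vert n k" E] inj Z \<open>m \<ge> 3\<close> by simp
qed

end
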